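(* Consider the integer quadratic program: minimize $x^TQx$ subject to $Ax\le b$, $Cx=d$, $x\in\mathbb{Z}^n$. For any deep optimal solution $x^\star$ of this program and any $y_i\in Y$ such that $y_i^TQ$ is linearly dependent on the rows of $C$ (i.e., lies in their linear span), the vectors $x^\star+y_i$ and $x^\star-y_i$ are also optimal solutions.
   Context: Setting: $Q$ is an $n\times n$ integer symmetric matrix, $A$ an $m\times n$ integer matrix, $b\in\mathbb{Z}^m$, $C$ an integer matrix with $n$ columns and linearly independent rows, and $d$ an integer vector. $\Delta$ is the maximum absolute value of the determinant of a square submatrix of $C$. $y_1,\dots,y_r$ is a basis of the nullspace of $C$ consisting of integer vectors with $|y_i|_\infty\le\Delta^2$, and $Y$ is the set of these vectors. A feasible solution is an $x\in\mathbb{Z}^n$ with $Ax\le b$ and $Cx=d$; an optimal solution is a feasible solution minimizing $x^TQx$ over all feasible solutions. A feasible solution $x$ is deep if $x+y_i$ and $x-y_i$ are feasible for all $y_i\in Y$. *)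

theory Defs
  imports "Jordan_Normal_Form.DL_Submatrix" "Jordan_Normal_Form.Determinant"
begin

(* Integer matrices/vectors are JNF 'int mat' / 'int vec'; linear algebra notions
   (independence, span, nullspace) are taken over the rationals. *)

definition ratm :: "int mat \<Rightarrow> rat mat" where
  "ratm M = map_mat rat_of_int M"

definition ratv :: "int vec \<Rightarrow> rat vec" where
  "ratv v = map_vec rat_of_int v"

definition rows_lin_indep :: "int mat \<Rightarrow> bool" where
  "rows_lin_indep C \<longleftrightarrow>
     (\<forall>l \<in> carrier_vec (dim_row C).
        transpose_mat (ratm C) *\<^sub>v l = 0\<^sub>v (dim_col C) \<longrightarrow> l = 0\<^sub>v (dim_row C))"

definition Delta :: "int mat \<Rightarrow> int" where
  "Delta C = Max {\<bar>det (submatrix C I J)\<bar> | I J.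
                   I \<subseteq> {..<dim_row C} \<and> J \<subseteq> {..<dim_col C} \<and> card I = card J}"

definition nullspace_basis :: "int mat \<Rightarrow> int vec list \<Rightarrow> bool" where
  "nullspace_basis C ys \<longleftrightarrow>
     (\<forall>y \<in> set ys. y \<in> carrier_vec (dim_col C) \<and> C *\<^sub>v y = 0\<^sub>v (dim_row C)) \<and>
     (\<forall>c \<in> carrier_vec (length ys).
        mat_of_cols (dim_col C) (map ratv ys) *\<^sub>v c = 0\<^sub>v (dim_col C) \<longrightarrow> c = 0\<^sub>v (length ys)) \<and>
     (\<forall>z \<in> carrier_vec (dim_col C). ratm C *\<^sub>v z = 0\<^sub>v (dim_row C) \<longrightarrow>
        (\<exists>c \<in> carrier_vec (length ys). mat_of_cols (dim_col C) (map ratv ys) *\<^sub>v c = z))"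

definition feasible :: "int mat \<Rightarrow> int vec \<Rightarrow> int mat \<Rightarrow> int vec \<Rightarrow> int vec \<Rightarrow> bool" where
  "feasible A b C d x \<longleftrightarrow> x \<in> carrier_vec (dim_col C) \<and>
     (\<forall>i < dim_row A. (A *\<^sub>v x) $ i \<le> b $ i) \<and> C *\<^sub>v x = d"

definition objective :: "int mat \<Rightarrow> int vec \<Rightarrow> int" where
  "objective Q x = x \<bullet> (Q *\<^sub>v x)"

definition optimal :: "int mat \<Rightarrow> int mat \<Rightarrow> int vec \<Rightarrow> int mat \<Rightarrow> int vec \<Rightarrow> int vec \<Rightarrow> bool" where
  "optimal Q A b C d x \<longleftrightarrow> feasible A b C d x \<and>
     (\<forall>z. feasible A b C d z \<longrightarrow> objective Q x \<le> objective Q z)"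

definition deep :: "int vec list \<Rightarrow> int mat \<Rightarrow> int vec \<Rightarrow> int mat \<Rightarrow> int vec \<Rightarrow> int vec \<Rightarrow> bool" where
  "deep ys A b C d x \<longleftrightarrow> feasible A b C d x \<and>
     (\<forall>y \<in> set ys. feasible A b C d (x + y) \<and> feasible A b C d (x - y))"

end

theory Submission imports Defs begin

text \<open>If \<open>x \<plusminus> y\<close> are both feasible, then \<open>f(x+y) + f(x-y) = 2 f(x) + 2 f(y)\<close> for
  \<open>f(x) = x\<^sup>TQx\<close>. When \<open>Q\<^sup>Ty\<close> lies in the row space of \<open>C\<close> and \<open>Cy = 0\<close>, we get
  \<open>f(y) = l\<^sup>TCy = 0\<close>, so the two values average to the optimum \<open>f(x)\<close>; being
  no smaller than it, both equal it.\<close>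

lemma objective_parallelogram:
  fixes Q :: "int mat"
  assumes Q: "Q \<in> carrier_mat n n" and x: "x \<in> carrier_vec n" and y: "y \<in> carrier_vec n"
  shows "objective Q (x + y) + objective Q (x - y) = 2 * objective Q x + 2 * objective Q y"
proof -
  have Qx: "Q *\<^sub>v x \<in> carrier_vec n" and Qy: "Q *\<^sub>v y \<in> carrier_vec n" using Q x y by auto
  have "objective Q (x + y) = x \<bullet> (Q *\<^sub>v x) + x \<bullet> (Q *\<^sub>v y) + (y \<bullet> (Q *\<^sub>v x) + y \<bullet> (Q *\<^sub>v y))"
    unfolding objective_def using Q x y Qx Qy
    by (simp add: mult_add_distrib_mat_vec add_scalar_prod_distrib[of _ n]
        scalar_prod_add_distrib[of _ n])
  moreover have "objective Q (x - y) = x \<bullet> (Q *\<^sub>v x) - x \<bullet> (Q *\<^sub>v y) - (y \<bullet> (Q *\<^sub>v x) - y \<bullet> (Q *\<^sub>v y))"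
    unfolding objective_def using Q x y Qx Qy
    by (simp add: mult_minus_distrib_mat_vec minus_scalar_prod_distrib[of _ n]
        scalar_prod_minus_distrib[of _ n])
  ultimately show ?thesis unfolding objective_def by simp
qed

lemma ratv_mult_mat_vec:
  assumes "M \<in> carrier_mat k n" and "v \<in> carrier_vec n"
  shows "ratv (M *\<^sub>v v) = ratm M *\<^sub>v ratv v"
  unfolding ratv_def ratm_def by (rule of_int_hom.mult_mat_vec_hom[OF assms])

lemma rat_of_int_objective:
  assumes "Q \<in> carrier_mat n n" and "x \<in> carrier_vec n"
  shows "rat_of_int (objective Q x) = ratv x \<bullet> (ratm Q *\<^sub>v ratv x)"
proof -
  have "rat_of_int (objective Q x) = ratv x \<bullet> ratv (Q *\<^sub>v x)"
    using assms unfolding objective_def ratv_def scalar_prod_def by (simp add: of_int_sum)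
  then show ?thesis using ratv_mult_mat_vec[OF assms] by simp
qed

lemma objective_eq_0_if_row_span_null:
  fixes Q C :: "int mat"
  assumes Q: "Q \<in> carrier_mat n n" and C: "C \<in> carrier_mat k n" and y: "y \<in> carrier_vec n"
    and Cy: "C *\<^sub>v y = 0\<^sub>v k" and l: "l \<in> carrier_vec k"
    and span: "transpose_mat (ratm Q) *\<^sub>v ratv y = transpose_mat (ratm C) *\<^sub>v l"
  shows "objective Q y = 0"
proof -
  have Qr: "ratm Q \<in> carrier_mat n n" and Cr: "ratm C \<in> carrier_mat k n"
    and yr: "ratv y \<in> carrier_vec n"
    using Q C y unfolding ratm_def ratv_def by auto
  have Cyr: "ratm C *\<^sub>v ratv y = 0\<^sub>v k"
    using ratv_mult_mat_vec[OF C y] Cy unfolding ratv_def by (metis of_int_hom.vec_hom_zero)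
  have "rat_of_int (objective Q y) = (transpose_mat (ratm Q) *\<^sub>v ratv y) \<bullet> ratv y"
    using rat_of_int_objective[OF Q y] transpose_vec_mult_scalar[OF Qr yr yr] by simp
  also have "\<dots> = l \<bullet> (ratm C *\<^sub>v ratv y)"
    using span transpose_vec_mult_scalar[OF Cr yr l] by simp
  also have "\<dots> = 0" using Cyr l by simp
  finally show ?thesis by simp
qed

lemma optimal_add_diff_if_objective_eq_0:
  assumes Q: "Q \<in> carrier_mat n n" and x: "x \<in> carrier_vec n" and y: "y \<in> carrier_vec n"
    and opt: "optimal Q A b C d x"
    and feas: "feasible A b C d (x + y)" "feasible A b C d (x - y)"
    and zero: "objective Q y = 0"
  shows "optimal Q A b C d (x + y) \<and> optimal Q A b C d (x - y)"
proof -
  have "objective Q x \<le> objective Q (x + y)" "objective Q x \<le> objective Q (x - y)"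
    using opt feas unfolding optimal_def by auto
  moreover have "objective Q (x + y) + objective Q (x - y) = 2 * objective Q x"
    using objective_parallelogram[OF Q x y] zero by simp
  ultimately have "objective Q (x + y) = objective Q x" "objective Q (x - y) = objective Q x"
    by auto
  then show ?thesis using opt feas unfolding optimal_def by auto
qed

theorem lemma4:
  fixes n m k :: nat and Q A C :: "int mat" and b d :: "int vec" and ys :: "int vec list"
    and xs y :: "int vec"
  assumes Q: "Q \<in> carrier_mat n n" "transpose_mat Q = Q"
    and A: "A \<in> carrier_mat m n" and b: "b \<in> carrier_vec m"
    and C: "C \<in> carrier_mat k n" "rows_lin_indep C" and d: "d \<in> carrier_vec k"
    and Y: "nullspace_basis C ys"
    and Ybound: "\<forall>v \<in> set ys. \<forall>j < n. \<bar>v $ j\<bar> \<le> (Delta C)^2"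
    and deep: "deep ys A b C d xs" and opt: "optimal Q A b C d xs"
    and yY: "y \<in> set ys"
    and dep: "\<exists>l \<in> carrier_vec k. transpose_mat (ratm Q) *\<^sub>v ratv y = transpose_mat (ratm C) *\<^sub>v l"
  shows "optimal Q A b C d (xs + y) \<and> optimal Q A b C d (xs - y)"
proof -
  have y: "y \<in> carrier_vec n" and Cy: "C *\<^sub>v y = 0\<^sub>v k"
    using Y yY C unfolding nullspace_basis_def by auto
  have x: "xs \<in> carrier_vec n" using opt C unfolding optimal_def feasible_def by auto
  have feas: "feasible A b C d (xs + y)" "feasible A b C d (xs - y)"
    using deep yY unfolding deep_def by auto
  obtain l where "l \<in> carrier_vec k"
    and "transpose_mat (ratm Q) *\<^sub>v ratv y = transpose_mat (ratm C) *\<^sub>v l"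
    using dep by blast
  then have "objective Q y = 0"
    using objective_eq_0_if_row_span_null[OF Q(1) C(1) y Cy] by blast
  then show ?thesis using optimal_add_diff_if_objective_eq_0[OF Q(1) x y opt feas] by blast
qed

end
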